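(* Let $n\ge 2$, $b\ge 2$ and $1\le r<b$ be integers with $n\ge b-r-1$. Then the circulant graph $G_{nb+r,b}$ satisfies $\operatorname{box}(G_{nb+r,b})\le\chi(G_{nb+r,b})$.
   Context: For integers $a\ge 2b\ge 2$, $G_{a,b}$ is the graph with vertex set $\{0,1,\ldots,a-1\}$ in which distinct $u,v$ are adjacent if and only if $u\in\{v+b,v+b+1,\ldots,v+a-b\}$ with addition modulo $a$. The boxicity $\operatorname{box}(G)$ is the minimum nonnegative integer $k$ such that $G$ is isomorphic to the intersection graph of a family of boxes (Cartesian products of $k$ closed real intervals) in $\mathbb{R}^k$. $\chi(G)$ is the chromatic number. *)

theory Defs
  imports Main Complex_Main
begin

definition circ_V :: "nat \<Rightarrow> nat set" where
  "circ_V a = {0..<a}"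

definition circ_adj :: "nat \<Rightarrow> nat \<Rightarrow> nat \<Rightarrow> nat \<Rightarrow> bool" where
  "circ_adj a b u v \<longleftrightarrow> u \<noteq> v \<and> (\<exists>k \<in> {b..a-b}. u = (v + k) mod a)"

definition box_rep :: "'a set \<Rightarrow> ('a \<Rightarrow> 'a \<Rightarrow> bool) \<Rightarrow> nat \<Rightarrow> bool" where
  "box_rep V E k \<longleftrightarrow> (\<exists>l h :: 'a \<Rightarrow> nat \<Rightarrow> real.
      (\<forall>v\<in>V. \<forall>i<k. l v i \<le> h v i) \<and>
      (\<forall>u\<in>V. \<forall>v\<in>V. u \<noteq> v \<longrightarrow>
         (E u v \<longleftrightarrow> (\<forall>i<k. {l u i..h u i} \<inter> {l v i..h v i} \<noteq> {}))))"

definition boxicity :: "'a set \<Rightarrow> ('a \<Rightarrow> 'a \<Rightarrow> bool) \<Rightarrow> nat" where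
  "boxicity V E = (LEAST k. box_rep V E k)"

definition proper_colouring :: "'a set \<Rightarrow> ('a \<Rightarrow> 'a \<Rightarrow> bool) \<Rightarrow> nat \<Rightarrow> ('a \<Rightarrow> nat) \<Rightarrow> bool" where
  "proper_colouring V E k c \<longleftrightarrow>
     (\<forall>v\<in>V. c v < k) \<and> (\<forall>u\<in>V. \<forall>v\<in>V. u \<noteq> v \<longrightarrow> E u v \<longrightarrow> c u \<noteq> c v)"

definition chromatic_number :: "'a set \<Rightarrow> ('a \<Rightarrow> 'a \<Rightarrow> bool) \<Rightarrow> nat" where
  "chromatic_number V E = (LEAST k. \<exists>c. proper_colouring V E k c)"

end

theory Submission
  imports Defs "HOL-Number_Theory.Cong"
begin

text \<open>Write \<open>a = nb + r\<close>, so \<open>\<lceil>a/b\<rceil> = n + 1\<close>. Both sides are compared with this number.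
  Boxicity: cut the cycle into \<open>n + 1\<close> blocks of at most \<open>b\<close> consecutive vertices and use one
  coordinate per block, in which the block's vertices are distinct points and every other vertex
  is an interval that reaches exactly the points lying at least \<open>b\<close> before it; a non-adjacent
  pair is separated in the coordinate of the block containing the earlier of the two.
  Chromatic number: an independent set lies in an arc of \<open>2b - 1\<close> vertices centred at any of
  its members, and two vertices of that arc at distance \<open>b\<close> are adjacent, so it has at most
  \<open>b\<close> vertices and at least \<open>a/b\<close> colours are needed.\<close>

definition indep_set :: "'a set \<Rightarrow> ('a \<Rightarrow> 'a \<Rightarrow> bool) \<Rightarrow> 'a set \<Rightarrow> bool" where
  "indep_set V E I \<longleftrightarrow> I \<subseteq> V \<and> (\<forall>u\<in>I. \<forall>v\<in>I. u \<noteq> v \<longrightarrow> \<not> E u v)"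

lemma boxicity_le: "box_rep V E k \<Longrightarrow> boxicity V E \<le> k"
  unfolding boxicity_def by (rule Least_le)

lemma proper_colouring_card_le:
  assumes "proper_colouring V E k c" and "\<And>I. indep_set V E I \<Longrightarrow> card I \<le> m"
  shows "card V \<le> k * m"
proof -
  have "(\<Union>j<k. {v\<in>V. c v = j}) = V"
    using assms(1) by (auto simp: proper_colouring_def)
  then have "card V \<le> (\<Sum>j<k. card {v\<in>V. c v = j})"
    using card_UN_le[of "{..<k}" "\<lambda>j. {v\<in>V. c v = j}"] by simp
  also have "\<dots> \<le> (\<Sum>j<k. m)"
    by (intro sum_mono assms(2)) (use assms(1) in \<open>fastforce simp: indep_set_def proper_colouring_def\<close>)
  finally show ?thesis by simp
qed

lemma proper_colouring_chromatic_number: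
  assumes "finite V"
  obtains c where "proper_colouring V E (chromatic_number V E) c"
proof -
  obtain f where "bij_betw f V {0..<card V}"
    using ex_bij_betw_finite_nat[OF assms] by blast
  then have "proper_colouring V E (card V) f"
    by (auto simp: proper_colouring_def bij_betw_def inj_on_def)
  then have "\<exists>c. proper_colouring V E (chromatic_number V E) c"
    unfolding chromatic_number_def by (intro LeastI) blast
  then show ?thesis
    using that by blast
qed

lemma card_le_chromatic_number_mult:
  assumes "finite V" and "\<And>I. indep_set V E I \<Longrightarrow> card I \<le> m"
  shows "card V \<le> chromatic_number V E * m"
proof -
  obtain c where "proper_colouring V E (chromatic_number V E) c"
    using proper_colouring_chromatic_number[OF assms(1)] .
  then show ?thesis
    using proper_colouring_card_le assms(2) by blast
qed

lemma add_mod_eq_add_mod_iff: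
  fixes u v c a :: nat
  assumes "u < a" "v < a"
  shows "(u + c) mod a = (v + c) mod a \<longleftrightarrow> u = v"
  using assms cong_add_rcancel_nat[of u c v a] by (simp add: cong_def)

lemma circ_adj_rotate:
  assumes "u < a" "v < a"
  shows "circ_adj a b ((u + c) mod a) ((v + c) mod a) \<longleftrightarrow> circ_adj a b u v"
proof -
  have shift: "(u + c) mod a = ((v + c) mod a + k) mod a \<longleftrightarrow> u = (v + k) mod a" for k
  proof -
    have "(u + c) mod a = ((v + c) mod a + k) mod a \<longleftrightarrow> [u + c = (v + k) + c] (mod a)"
      by (simp add: cong_def mod_simps ac_simps)
    also have "\<dots> \<longleftrightarrow> [u = v + k] (mod a)"
      by (rule cong_add_rcancel_nat)
    also have "\<dots> \<longleftrightarrow> u = (v + k) mod a"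
      using assms(1) by (simp add: cong_def)
    finally show ?thesis .
  qed
  show ?thesis
    unfolding circ_adj_def shift add_mod_eq_add_mod_iff[OF assms] ..
qed

lemma circ_adj_iff_abs_diff:
  fixes a b u v :: nat
  assumes "u < a" "v < a" "1 \<le> b"
  shows "circ_adj a b u v \<longleftrightarrow> int b \<le> \<bar>int u - int v\<bar> \<and> \<bar>int u - int v\<bar> \<le> int a - int b"
proof
  assume "circ_adj a b u v"
  then obtain k where k: "b \<le> k" "k \<le> a - b" "u = (v + k) mod a"
    unfolding circ_adj_def by auto
  show "int b \<le> \<bar>int u - int v\<bar> \<and> \<bar>int u - int v\<bar> \<le> int a - int b"
  proof (cases "v + k < a")
    case True
    then show ?thesis using k by auto
  next
    case False
    then have "u = v + k - a" using k assms by (simp add: le_mod_geq)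
    then show ?thesis using k assms False by auto
  qed
next
  assume dist: "int b \<le> \<bar>int u - int v\<bar> \<and> \<bar>int u - int v\<bar> \<le> int a - int b"
  define k where "k = (if v \<le> u then u - v else u + a - v)"
  have "u = (v + k) mod a" "k \<in> {b..a-b}" "u \<noteq> v"
    using assms dist by (auto simp: k_def le_mod_geq)
  then show "circ_adj a b u v"
    unfolding circ_adj_def by blast
qed

lemma circ_not_adj_cases:
  assumes "u < a" "v < a" "1 \<le> b" "u \<noteq> v" "\<not> circ_adj a b u v"
  obtains d where "0 < d" "d < b" "v = (u + d) mod a"
    | d where "0 < d" "d < b" "u = (v + d) mod a"
proof -
  have "\<bar>int u - int v\<bar> < int b \<or> \<bar>int u - int v\<bar> > int a - int b"
    using assms circ_adj_iff_abs_diff by fastforce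
  then have "u < v \<and> v - u < b \<or> v < u \<and> u - v < b \<or> u < v \<and> u + a - v < b \<or> v < u \<and> v + a - u < b"
    using assms(1,2,4) by (cases "u < v") (simp_all add: of_nat_diff, linarith+)
  then consider "u < v" "v - u < b" | "v < u" "u - v < b"
    | "u < v" "u + a - v < b" | "v < u" "v + a - u < b"
    by blast
  then show ?thesis
  proof cases
    case 1
    then show ?thesis using that(1)[of "v - u"] assms by simp
  next
    case 2
    then show ?thesis using that(2)[of "u - v"] assms by simp
  next
    case 3
    then show ?thesis using that(2)[of "u + a - v"] assms by (simp add: le_mod_geq)
  next
    case 4
    then show ?thesis using that(1)[of "v + a - u"] assms by (simp add: le_mod_geq)
  qed
qed

lemma mod_eq_below_double:
  fixes x y b :: nat
  assumes "x < 2 * b" "y < 2 * b" "x mod b = y mod b" "x < y"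
  shows "y = x + b"
proof -
  have "x div b < 2" "y div b < 2"
    using assms by (simp_all add: less_mult_imp_div_less mult.commute)
  moreover have "x div b < y div b"
    using assms by (metis div_le_mono div_mult_mod_eq le_eq_less_or_eq less_imp_le nat_less_le)
  ultimately have "x div b = 0" "y div b = 1" by linarith+
  then show ?thesis
    using assms(3) div_mult_mod_eq[of x b] div_mult_mod_eq[of y b] by simp
qed

lemma add_diff_mod_self:
  fixes u p a :: nat
  assumes "p \<le> u" "u < a"
  shows "(u + (a - p)) mod a = u - p"
proof -
  have shift: "u + (a - p) = (u - p) + a"
    using assms by linarith
  show ?thesis
    unfolding shift mod_add_self2 using assms by simp
qed

lemma circ_adj_add:
  assumes "1 \<le> b" "b \<le> k" "k \<le> a - b" "v + k < a"
  shows "circ_adj a b (v + k) v"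
  unfolding circ_adj_def using assms by (auto intro!: bexI[of _ k])

lemma circ_indep_card_le:
  assumes "1 \<le> b" "2 * b \<le> a" "indep_set (circ_V a) (circ_adj a b) I"
  shows "card I \<le> b"
proof (cases "I = {}")
  case False
  then obtain x0 where x0: "x0 \<in> I" by blast
  have I: "I \<subseteq> {0..<a}" and indep: "\<And>u v. u \<in> I \<Longrightarrow> v \<in> I \<Longrightarrow> u \<noteq> v \<Longrightarrow> \<not> circ_adj a b u v"
    using assms(3) by (auto simp: indep_set_def circ_V_def)
  \<comment> \<open>Rotate \<open>x0\<close> to \<open>b - 1\<close>; then \<open>I\<close> lies below \<open>2b\<close> and reduction mod \<open>b\<close> is injective on it.\<close>
  define rot where "rot y = (y + (a + b - 1 - x0)) mod a" for y
  have rot_lt: "rot y < a" for y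
    using assms unfolding rot_def by simp
  have rot_inj: "rot y = rot z \<longleftrightarrow> y = z" if "y \<in> I" "z \<in> I" for y z
    unfolding rot_def using I that by (intro add_mod_eq_add_mod_iff) auto
  have rot_not_adj: "\<not> circ_adj a b (rot y) (rot z)" if "y \<in> I" "z \<in> I" "y \<noteq> z" for y z
  proof -
    have "y < a" "z < a"
      using I that by auto
    then show ?thesis
      using circ_adj_rotate[of y a z b] indep that unfolding rot_def by simp
  qed
  have x0_shift: "x0 + (a + b - 1 - x0) = (b - 1) + a"
    using x0 I assms(1) by auto
  have rot_x0: "rot x0 = b - 1"
    unfolding rot_def x0_shift mod_add_self2 using assms by simp
  have arc: "rot y < 2 * b" if "y \<in> I" for y
  proof (rule ccontr)
    assume far: "\<not> rot y < 2 * b"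
    moreover have "rot x0 < 2 * b"
      using rot_x0 assms(1) by simp
    ultimately have "y \<noteq> x0"
      by blast
    have "circ_adj a b ((b - 1) + (rot y - (b - 1))) (b - 1)"
      using far rot_lt[of y] assms by (intro circ_adj_add) auto
    then show False
      using rot_not_adj[OF that x0 \<open>y \<noteq> x0\<close>] far rot_x0 by simp
  qed
  have "inj_on (\<lambda>y. rot y mod b) I"
  proof (rule inj_onI, rule ccontr)
    fix y z assume yz: "y \<in> I" "z \<in> I" "rot y mod b = rot z mod b" "y \<noteq> z"
    then have "rot y \<noteq> rot z"
      using rot_inj by blast
    then consider "rot z = rot y + b" | "rot y = rot z + b"
      using mod_eq_below_double[OF arc arc] yz by (metis linorder_neqE_nat)
    then show False
    proof cases
      case 1
      then have "circ_adj a b (rot z) (rot y)"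
        using rot_lt[of z] assms by (simp add: circ_adj_add)
      then show False
        using rot_not_adj yz by blast
    next
      case 2
      then have "circ_adj a b (rot y) (rot z)"
        using rot_lt[of y] assms by (simp add: circ_adj_add)
      then show False
        using rot_not_adj yz by blast
    qed
  qed
  then have "card I = card ((\<lambda>y. rot y mod b) ` I)"
    by (simp add: card_image)
  also have "\<dots> \<le> card {..<b}"
    using assms(1) by (intro card_mono) auto
  finally show ?thesis by simp
qed simp

text \<open>The argument \<open>t\<close> is the cyclic position \<open>(v - p) mod a\<close> of a vertex \<open>v\<close> relative to the
  start \<open>p\<close> of a block; the interval of position \<open>t \<ge> b\<close> contains the point of position
  \<open>t' < b\<close> iff \<open>t - t' \<ge> b\<close>.\<close>

definition circ_box_lo :: "nat \<Rightarrow> nat \<Rightarrow> nat \<Rightarrow> real" where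
  "circ_box_lo a b t = (if t < b then - 2 * real t else 2 * real b - 2 * real t - 1)"

definition circ_box_hi :: "nat \<Rightarrow> nat \<Rightarrow> nat \<Rightarrow> real" where
  "circ_box_hi a b t = (if t < b then - 2 * real t else 2 * real a)"

lemma circ_box_lo_le_hi: "circ_box_lo a b t \<le> circ_box_hi a b t"
  by (simp add: circ_box_lo_def circ_box_hi_def)

lemma circ_box_meet:
  assumes "t < a" "s < a" "1 \<le> b" "circ_adj a b t s"
  shows "{circ_box_lo a b t..circ_box_hi a b t} \<inter> {circ_box_lo a b s..circ_box_hi a b s} \<noteq> {}"
proof -
  have "b \<le> t \<or> t + b \<le> s" "b \<le> s \<or> s + b \<le> t"
    using assms circ_adj_iff_abs_diff by fastforce+
  then show ?thesis
    by (auto simp: circ_box_lo_def circ_box_hi_def)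
qed

lemma circ_box_disjoint:
  assumes "t < b" "t \<noteq> s" "s < t + b"
  shows "{circ_box_lo a b t..circ_box_hi a b t} \<inter> {circ_box_lo a b s..circ_box_hi a b s} = {}"
  using assms by (auto simp: circ_box_lo_def circ_box_hi_def)

lemma box_rep_circ:
  assumes "1 \<le> b" "2 * b \<le> a" "a \<le> k * b"
  shows "box_rep (circ_V a) (circ_adj a b) k"
proof -
  define rot where "rot i v = (v + (a - i * b mod a)) mod a" for i v
  define l where "l v i = circ_box_lo a b (rot i v)" for v i
  define h where "h v i = circ_box_hi a b (rot i v)" for v i
  let ?meet = "\<lambda>u v i. {l u i..h u i} \<inter> {l v i..h v i} \<noteq> {}"
  have rot_lt: "rot i v < a" for i v
    using assms unfolding rot_def by simp
  have rot_adj: "circ_adj a b (rot i u) (rot i v) \<longleftrightarrow> circ_adj a b u v" if "u < a" "v < a" for i u v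
    unfolding rot_def using circ_adj_rotate that by blast
  have separate: "\<exists>i<k. \<not> ?meet u ((u + d) mod a) i" if "u < a" "0 < d" "d < b" for u d
  proof (intro exI conjI)
    let ?i = "u div b"
    show "?i < k"
      using that assms by (simp add: less_mult_imp_div_less)
    have "?i * b \<le> u"
      by (simp add: div_times_less_eq_dividend)
    moreover have "?i * b mod a = ?i * b"
      using \<open>?i * b \<le> u\<close> that(1) by (meson le_less_trans mod_less)
    ultimately have "rot ?i u = u mod b"
      unfolding rot_def using add_diff_mod_self that(1) by (simp only:) (simp add: minus_div_mult_eq_mod)
    moreover have "rot ?i ((u + d) mod a) = (rot ?i u + d) mod a"
      by (simp add: rot_def mod_simps ac_simps)
    moreover have "u mod b < b"
      using that by simp
    moreover from this have "u mod b + d < a"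
      using that assms by linarith
    ultimately show "\<not> ?meet u ((u + d) mod a) ?i"
      unfolding l_def h_def using circ_box_disjoint[of "u mod b" b "u mod b + d" a] that by simp
  qed
  show ?thesis
    unfolding box_rep_def
  proof (intro exI conjI ballI impI allI)
    show "l v i \<le> h v i" for v i
      unfolding l_def h_def by (rule circ_box_lo_le_hi)
    fix u v assume "u \<in> circ_V a" "v \<in> circ_V a" "u \<noteq> v"
    then have uv: "u < a" "v < a" "u \<noteq> v"
      by (auto simp: circ_V_def)
    show "circ_adj a b u v \<longleftrightarrow> (\<forall>i<k. ?meet u v i)"
    proof
      assume "circ_adj a b u v"
      then show "\<forall>i<k. ?meet u v i"
        unfolding l_def h_def using circ_box_meet rot_lt rot_adj uv assms(1) by blast
    next
      assume meet: "\<forall>i<k. ?meet u v i"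
      show "circ_adj a b u v"
      proof (rule ccontr)
        assume "\<not> circ_adj a b u v"
        then consider d where "0 < d" "d < b" "v = (u + d) mod a"
          | d where "0 < d" "d < b" "u = (v + d) mod a"
          using circ_not_adj_cases uv assms(1) by metis
        then show False
        proof cases
          case (1 d)
          then show False
            using meet separate[of u d] uv by auto
        next
          case (2 d)
          then show False
            using meet separate[of v d] uv by (auto simp: Int_commute)
        qed
      qed
    qed
  qed
qed

theorem theorem4p2:
  fixes n b r :: nat
  assumes "n \<ge> 2" and "b \<ge> 2" and "1 \<le> r" and "r < b" and "n \<ge> b - r - 1"
  shows "boxicity (circ_V (n*b+r)) (circ_adj (n*b+r) b)
           \<le> chromatic_number (circ_V (n*b+r)) (circ_adj (n*b+r) b)"
proof -
  define a where "a = n * b + r"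
  have "2 * b \<le> n * b"
    using assms(1) by simp
  then have "2 * b \<le> a"
    unfolding a_def by linarith
  have b: "1 \<le> b" and "a \<le> (n + 1) * b" "n * b < a"
    using assms unfolding a_def by simp_all
  then have "boxicity (circ_V a) (circ_adj a b) \<le> n + 1"
    using \<open>2 * b \<le> a\<close> by (intro boxicity_le box_rep_circ)
  moreover have "a \<le> chromatic_number (circ_V a) (circ_adj a b) * b"
    using card_le_chromatic_number_mult[of "circ_V a" "circ_adj a b" b]
      circ_indep_card_le[OF b \<open>2 * b \<le> a\<close>] by (simp add: circ_V_def)
  then have "n * b < chromatic_number (circ_V a) (circ_adj a b) * b"
    using \<open>n * b < a\<close> by linarith
  then have "n < chromatic_number (circ_V a) (circ_adj a b)"
    by simp
  ultimately show ?thesis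
    unfolding a_def by simp
qed

end
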